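(* Let $\Gamma$ be a finite multiset of formulas and $B$ a formula such that $\Gamma\longrightarrow B$ has a $\mathbf{C}$-proof in which no $\supset$-L, no $\lor$-R and no $\exists$-R rule is used. Then $\Gamma\longrightarrow B$ has an $\mathbf{I}$-proof.
   Context: Formulas are first-order formulas built from atomic formulas and the logical constants $\top$, $\bot$ (not counted as atomic) using $\land,\lor,\supset,\forall,\exists$; $\neg A$ abbreviates $A\supset\bot$; $B[t/x]$ is capture-avoiding substitution of term $t$ for free $x$ in $B$. A sequent $\Gamma\longrightarrow\Delta$ is a pair of finite multisets of formulas; $B,\Gamma$ denotes $\Gamma$ with an extra occurrence of $B$. A sequent is an axiom if $\top\in\Delta$ or some formula that is $\bot$ or atomic occurs in both $\Gamma$ and $\Delta$. Writing premises $\Rightarrow$ conclusion, the rules are all instances of: contr-L: $B,B,\Gamma\longrightarrow\Delta\Rightarrow B,\Gamma\longrightarrow\Delta$; contr-R: $\Gamma\longrightarrow\Delta,B,B\Rightarrow\Gamma\longrightarrow\Delta,B$; $\bot$-R: $\Gamma\longrightarrow\Delta,\bot\Rightarrow\Gamma\longrightarrow\Delta,D$; $\land$-L: $B,\Gamma\longrightarrow\Delta\Rightarrow B\land D,\Gamma\longrightarrow\Delta$ and $D,\Gamma\longrightarrow\Delta\Rightarrow B\land D,\Gamma\longrightarrow\Delta$; $\lor$-L: $B,\Gamma\longrightarrow\Delta$ and $D,\Gamma\longrightarrow\Delta\Rightarrow B\lor D,\Gamma\longrightarrow\Delta$; $\land$-R: $\Gamma\longrightarrow\Delta,B$ and $\Gamma\longrightarrow\Delta,D\Rightarrow\Gamma\longrightarrow\Delta,B\land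 D$; $\lor$-R: $\Gamma\longrightarrow\Delta,B\Rightarrow\Gamma\longrightarrow\Delta,B\lor D$ and $\Gamma\longrightarrow\Delta,D\Rightarrow\Gamma\longrightarrow\Delta,B\lor D$; $\supset$-L: $\Gamma\longrightarrow\Delta,B$ and $D,\Gamma\longrightarrow\Theta\Rightarrow B\supset D,\Gamma\longrightarrow\Delta,\Theta$; $\supset$-R: $B,\Gamma\longrightarrow\Delta,D\Rightarrow\Gamma\longrightarrow\Delta,B\supset D$; $\forall$-L: $B[t/x],\Gamma\longrightarrow\Delta\Rightarrow\forall x B,\Gamma\longrightarrow\Delta$; $\exists$-R: $\Gamma\longrightarrow\Delta,B[t/x]\Rightarrow\Gamma\longrightarrow\Delta,\exists x B$ ($t$ any term); $\exists$-L: $B[c/x],\Gamma\longrightarrow\Delta\Rightarrow\exists x B,\Gamma\longrightarrow\Delta$; $\forall$-R: $\Gamma\longrightarrow\Delta,B[c/x]\Rightarrow\Gamma\longrightarrow\Delta,\forall x B$, where the constant $c$ does not occur in the conclusion. A $\mathbf{C}$-proof (classical) is a finite tree of sequents with axioms at the leaves, each internal node being the conclusion of a rule instance whose premises are its children. An $\mathbf{I}$-proof (intuitionistic) is a $\mathbf{C}$-proof in which every sequent has exactly one formula in its succedent. A rule "is used" if some instance of that schema occurs in the proof. *)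

theory Defs
  imports Main "HOL-Library.Multiset"
begin

section \<open>First-order syntax (de Bruijn indices for bound and free variables)\<close>

datatype trm = Var nat | Fun nat "trm list"

datatype fm =
    Atom nat "trm list"
  | Top
  | Bot
  | And fm fm
  | Or fm fm
  | Imp fm fm
  | All fm
  | Ex fm

text \<open>Constants are nullary function symbols \<open>Fun c []\<close>.\<close>

primrec consts_trm :: "trm \<Rightarrow> nat set"
  and consts_trms :: "trm list \<Rightarrow> nat set" where
  "consts_trm (Var i) = {}"
| "consts_trm (Fun f ts) = (if ts = [] then {f} else consts_trms ts)"
| "consts_trms [] = {}"
| "consts_trms (t # ts) = consts_trm t \<union> consts_trms ts"

primrec consts_fm :: "fm \<Rightarrow> nat set" where
  "consts_fm (Atom p ts) = consts_trms ts"
| "consts_fm Top = {}"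
| "consts_fm Bot = {}"
| "consts_fm (And A B) = consts_fm A \<union> consts_fm B"
| "consts_fm (Or A B) = consts_fm A \<union> consts_fm B"
| "consts_fm (Imp A B) = consts_fm A \<union> consts_fm B"
| "consts_fm (All A) = consts_fm A"
| "consts_fm (Ex A) = consts_fm A"

primrec liftt :: "trm \<Rightarrow> trm" and liftts :: "trm list \<Rightarrow> trm list" where
  "liftt (Var i) = Var (Suc i)"
| "liftt (Fun f ts) = Fun f (liftts ts)"
| "liftts [] = []"
| "liftts (t # ts) = liftt t # liftts ts"

primrec substt :: "trm \<Rightarrow> trm \<Rightarrow> nat \<Rightarrow> trm"
  and substts :: "trm list \<Rightarrow> trm \<Rightarrow> nat \<Rightarrow> trm list" where
  "substt (Var i) s k = (if k < i then Var (i - 1) else if i = k then s else Var i)"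
| "substt (Fun f ts) s k = Fun f (substts ts s k)"
| "substts [] s k = []"
| "substts (t # ts) s k = substt t s k # substts ts s k"

primrec subst :: "fm \<Rightarrow> trm \<Rightarrow> nat \<Rightarrow> fm" where
  "subst (Atom p ts) s k = Atom p (substts ts s k)"
| "subst Top s k = Top"
| "subst Bot s k = Bot"
| "subst (And A B) s k = And (subst A s k) (subst B s k)"
| "subst (Or A B) s k = Or (subst A s k) (subst B s k)"
| "subst (Imp A B) s k = Imp (subst A s k) (subst B s k)"
| "subst (All A) s k = All (subst A (liftt s) (Suc k))"
| "subst (Ex A) s k = Ex (subst A (liftt s) (Suc k))"

text \<open>\<open>inst B t\<close> is \<open>B[t/x]\<close> for the body \<open>B\<close> of \<open>\<forall>x B\<close> / \<open>\<exists>x B\<close>.\<close>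
abbreviation inst :: "fm \<Rightarrow> trm \<Rightarrow> fm" where
  "inst B t \<equiv> subst B t 0"

definition is_atom :: "fm \<Rightarrow> bool" where
  "is_atom F \<longleftrightarrow> (\<exists>p ts. F = Atom p ts)"

type_synonym sequent = "fm multiset \<times> fm multiset"

definition is_axiom :: "sequent \<Rightarrow> bool" where
  "is_axiom s \<longleftrightarrow> (Top \<in># snd s \<or>
     (\<exists>F. (F = Bot \<or> is_atom F) \<and> F \<in># fst s \<and> F \<in># snd s))"

definition consts_seq :: "sequent \<Rightarrow> nat set" where
  "consts_seq s = (\<Union>F\<in>set_mset (fst s + snd s). consts_fm F)"

datatype rule = ContrL | ContrR | BotR | AndL | OrL | AndR | OrR | ImpL | ImpR
  | AllL | ExR | ExL | AllR

text \<open>\<open>deriv R P s\<close>: the sequent \<open>s\<close> has a proof (a finite tree) using only rule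
  schemas in \<open>R\<close>, in which every sequent satisfies \<open>P\<close>.\<close>

inductive deriv :: "rule set \<Rightarrow> (sequent \<Rightarrow> bool) \<Rightarrow> sequent \<Rightarrow> bool"
  for R :: "rule set" and P :: "sequent \<Rightarrow> bool" where
  Axiom: "P s \<Longrightarrow> is_axiom s \<Longrightarrow> deriv R P s"
| ContrL: "ContrL \<in> R \<Longrightarrow> P (add_mset B \<Gamma>, \<Delta>) \<Longrightarrow>
    deriv R P (add_mset B (add_mset B \<Gamma>), \<Delta>) \<Longrightarrow> deriv R P (add_mset B \<Gamma>, \<Delta>)"
| ContrR: "ContrR \<in> R \<Longrightarrow> P (\<Gamma>, add_mset B \<Delta>) \<Longrightarrow>
    deriv R P (\<Gamma>, add_mset B (add_mset B \<Delta>)) \<Longrightarrow> deriv R P (\<Gamma>, add_mset B \<Delta>)"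
| BotR: "BotR \<in> R \<Longrightarrow> P (\<Gamma>, add_mset D \<Delta>) \<Longrightarrow>
    deriv R P (\<Gamma>, add_mset Bot \<Delta>) \<Longrightarrow> deriv R P (\<Gamma>, add_mset D \<Delta>)"
| AndL1: "AndL \<in> R \<Longrightarrow> P (add_mset (And B D) \<Gamma>, \<Delta>) \<Longrightarrow>
    deriv R P (add_mset B \<Gamma>, \<Delta>) \<Longrightarrow> deriv R P (add_mset (And B D) \<Gamma>, \<Delta>)"
| AndL2: "AndL \<in> R \<Longrightarrow> P (add_mset (And B D) \<Gamma>, \<Delta>) \<Longrightarrow>
    deriv R P (add_mset D \<Gamma>, \<Delta>) \<Longrightarrow> deriv R P (add_mset (And B D) \<Gamma>, \<Delta>)"
| OrL: "OrL \<in> R \<Longrightarrow> P (add_mset (Or B D) \<Gamma>, \<Delta>) \<Longrightarrow>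
    deriv R P (add_mset B \<Gamma>, \<Delta>) \<Longrightarrow> deriv R P (add_mset D \<Gamma>, \<Delta>) \<Longrightarrow>
    deriv R P (add_mset (Or B D) \<Gamma>, \<Delta>)"
| AndR: "AndR \<in> R \<Longrightarrow> P (\<Gamma>, add_mset (And B D) \<Delta>) \<Longrightarrow>
    deriv R P (\<Gamma>, add_mset B \<Delta>) \<Longrightarrow> deriv R P (\<Gamma>, add_mset D \<Delta>) \<Longrightarrow>
    deriv R P (\<Gamma>, add_mset (And B D) \<Delta>)"
| OrR1: "OrR \<in> R \<Longrightarrow> P (\<Gamma>, add_mset (Or B D) \<Delta>) \<Longrightarrow>
    deriv R P (\<Gamma>, add_mset B \<Delta>) \<Longrightarrow> deriv R P (\<Gamma>, add_mset (Or B D) \<Delta>)"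
| OrR2: "OrR \<in> R \<Longrightarrow> P (\<Gamma>, add_mset (Or B D) \<Delta>) \<Longrightarrow>
    deriv R P (\<Gamma>, add_mset D \<Delta>) \<Longrightarrow> deriv R P (\<Gamma>, add_mset (Or B D) \<Delta>)"
| ImpL: "ImpL \<in> R \<Longrightarrow> P (add_mset (Imp B D) \<Gamma>, \<Delta> + \<Theta>) \<Longrightarrow>
    deriv R P (\<Gamma>, add_mset B \<Delta>) \<Longrightarrow> deriv R P (add_mset D \<Gamma>, \<Theta>) \<Longrightarrow>
    deriv R P (add_mset (Imp B D) \<Gamma>, \<Delta> + \<Theta>)"
| ImpR: "ImpR \<in> R \<Longrightarrow> P (\<Gamma>, add_mset (Imp B D) \<Delta>) \<Longrightarrow>
    deriv R P (add_mset B \<Gamma>, add_mset D \<Delta>) \<Longrightarrow> deriv R P (\<Gamma>, add_mset (Imp B D) \<Delta>)"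
| AllL: "AllL \<in> R \<Longrightarrow> P (add_mset (All B) \<Gamma>, \<Delta>) \<Longrightarrow>
    deriv R P (add_mset (inst B t) \<Gamma>, \<Delta>) \<Longrightarrow> deriv R P (add_mset (All B) \<Gamma>, \<Delta>)"
| ExR: "ExR \<in> R \<Longrightarrow> P (\<Gamma>, add_mset (Ex B) \<Delta>) \<Longrightarrow>
    deriv R P (\<Gamma>, add_mset (inst B t) \<Delta>) \<Longrightarrow> deriv R P (\<Gamma>, add_mset (Ex B) \<Delta>)"
| ExL: "ExL \<in> R \<Longrightarrow> P (add_mset (Ex B) \<Gamma>, \<Delta>) \<Longrightarrow>
    c \<notin> consts_seq (add_mset (Ex B) \<Gamma>, \<Delta>) \<Longrightarrow>
    deriv R P (add_mset (inst B (Fun c [])) \<Gamma>, \<Delta>) \<Longrightarrow> deriv R P (add_mset (Ex B) \<Gamma>, \<Delta>)"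
| AllR: "AllR \<in> R \<Longrightarrow> P (\<Gamma>, add_mset (All B) \<Delta>) \<Longrightarrow>
    c \<notin> consts_seq (\<Gamma>, add_mset (All B) \<Delta>) \<Longrightarrow>
    deriv R P (\<Gamma>, add_mset (inst B (Fun c [])) \<Delta>) \<Longrightarrow> deriv R P (\<Gamma>, add_mset (All B) \<Delta>)"

text \<open>C-proofs using only rules from \<open>R\<close>; I-proofs (every succedent a singleton).\<close>

abbreviation C_proof_using :: "rule set \<Rightarrow> sequent \<Rightarrow> bool" where
  "C_proof_using R s \<equiv> deriv R (\<lambda>_. True) s"

abbreviation I_provable :: "sequent \<Rightarrow> bool" where
  "I_provable s \<equiv> deriv UNIV (\<lambda>s. size (snd s) = 1) s"

end

theory Submission
  imports Defs
begin

(* Without \<supset>-L, \<or>-R and \<exists>-R the only rules acting on succedent formulas are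
   contraction, \<bottom>-R and the right rules for \<and>, \<supset> and \<forall>, and the latter are invertible
   provided all copies of the principal formula are inverted at once (contraction may have
   duplicated it). So a proof of \<Gamma> \<longrightarrow> \<Delta>, with \<Delta> made of copies of B and \<bottom>, turns into one
   whose succedent is made of copies of an immediate subformula of B and \<bottom>; the antecedent
   of an implication is added to \<Gamma> only once. Induction on B leaves the case of an atom,
   \<top>, \<bottom>, a disjunction or an existential, on which no right rule other than contraction
   and \<bottom>-R can act: the proof is then replayed with the single succedent B, or \<bottom> turned
   into B by \<bottom>-R. *)

section \<open>Renaming constants\<close>

primrec rename_trm :: "(nat \<Rightarrow> nat) \<Rightarrow> trm \<Rightarrow> trm" where
  "rename_trm \<sigma> (Var i) = Var i"
| "rename_trm \<sigma> (Fun f ts) = (if ts = [] then Fun (\<sigma> f) [] else Fun f (map (rename_trm \<sigma>) ts))"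

primrec rename :: "(nat \<Rightarrow> nat) \<Rightarrow> fm \<Rightarrow> fm" where
  "rename \<sigma> (Atom p ts) = Atom p (map (rename_trm \<sigma>) ts)"
| "rename \<sigma> Top = Top"
| "rename \<sigma> Bot = Bot"
| "rename \<sigma> (And A B) = And (rename \<sigma> A) (rename \<sigma> B)"
| "rename \<sigma> (Or A B) = Or (rename \<sigma> A) (rename \<sigma> B)"
| "rename \<sigma> (Imp A B) = Imp (rename \<sigma> A) (rename \<sigma> B)"
| "rename \<sigma> (All A) = All (rename \<sigma> A)"
| "rename \<sigma> (Ex A) = Ex (rename \<sigma> A)"

lemma liftts_eq_map [simp]: "liftts ts = map liftt ts"
  by (induct ts) auto

lemma substts_eq_map [simp]: "substts ts s k = map (\<lambda>t. substt t s k) ts"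
  by (induct ts) auto

lemma consts_trms_eq_UN [simp]: "consts_trms ts = (\<Union>t\<in>set ts. consts_trm t)"
  by (induct ts) auto

lemma rename_trm_liftt [simp]: "rename_trm \<sigma> (liftt t) = liftt (rename_trm \<sigma> t)"
  by (induct t) auto

lemma rename_trm_substt [simp]:
  "rename_trm \<sigma> (substt t s k) = substt (rename_trm \<sigma> t) (rename_trm \<sigma> s) k"
  by (induct t) auto

lemma rename_subst [simp]: "rename \<sigma> (subst A s k) = subst (rename \<sigma> A) (rename_trm \<sigma> s) k"
  by (induct A arbitrary: s k) auto

lemma rename_trm_cong:
  "(\<And>c. c \<in> consts_trm t \<Longrightarrow> \<sigma> c = \<tau> c) \<Longrightarrow> rename_trm \<sigma> t = rename_trm \<tau> t"
  by (induct t) (auto cong: map_cong, meson)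

lemma rename_cong: "(\<And>c. c \<in> consts_fm A \<Longrightarrow> \<sigma> c = \<tau> c) \<Longrightarrow> rename \<sigma> A = rename \<tau> A"
  by (induct A) (auto intro: rename_trm_cong)

lemma rename_fun_upd_fresh: "c \<notin> consts_fm A \<Longrightarrow> rename (\<sigma>(c := d)) A = rename \<sigma> A"
  by (rule rename_cong) auto

lemma image_mset_rename_fun_upd_fresh:
  "\<forall>A\<in>#M. c \<notin> consts_fm A \<Longrightarrow> image_mset (rename (\<sigma>(c := d))) M = image_mset (rename \<sigma>) M"
  by (auto intro: image_mset_cong rename_fun_upd_fresh)

lemma rename_trm_id [simp]: "rename_trm (\<lambda>c. c) t = t"
  by (induct t) (auto intro: map_idI)

lemma rename_id [simp]: "rename (\<lambda>c. c) = (\<lambda>A. A)"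
proof
  show "rename (\<lambda>c. c) A = A" for A
    by (induct A) (auto simp: map_idI)
qed

lemma is_atom_rename [simp]: "is_atom (rename \<sigma> A) = is_atom A"
  by (cases A) (auto simp: is_atom_def)

lemma rename_eq_Bot_iff [simp]: "rename \<sigma> A = Bot \<longleftrightarrow> A = Bot"
  by (cases A) auto

lemma rename_eq_Top_iff [simp]: "rename \<sigma> A = Top \<longleftrightarrow> A = Top"
  by (cases A) auto

lemma consts_liftt [simp]: "consts_trm (liftt t) = consts_trm t"
  by (induct t) auto

lemma consts_substt: "consts_trm (substt t s k) \<subseteq> consts_trm t \<union> consts_trm s"
  by (induct t) auto

lemma consts_subst: "consts_fm (subst A s k) \<subseteq> consts_fm A \<union> consts_trm s"
  using consts_substt by (induct A arbitrary: s k) fastforce+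

lemma finite_consts_trm [simp]: "finite (consts_trm t)"
  by (induct t) auto

lemma finite_consts_fm [simp]: "finite (consts_fm A)"
  by (induct A) auto

lemma finite_consts_seq [simp]: "finite (consts_seq s)"
  by (auto simp: consts_seq_def)

lemma is_axiom_rename_weaken:
  assumes "is_axiom s"
  shows "is_axiom (image_mset (rename \<sigma>) (fst s) + \<Sigma>, image_mset (rename \<sigma>) (snd s))"
proof -
  have image: "rename \<sigma> A \<in># image_mset (rename \<sigma>) M" if "A \<in># M" for A M
    using that unfolding in_image_mset by (rule imageI)
  from assms consider "Top \<in># snd s" | A where "A = Bot \<or> is_atom A" "A \<in># fst s" "A \<in># snd s"
    unfolding is_axiom_def by blast
  then show ?thesis
  proof cases
    case 1
    then show ?thesis
      using image[of Top] unfolding is_axiom_def by simp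
  next
    case (2 A)
    then have "rename \<sigma> A = Bot \<or> is_atom (rename \<sigma> A)"
      "rename \<sigma> A \<in># image_mset (rename \<sigma>) (fst s) + \<Sigma>"
      "rename \<sigma> A \<in># image_mset (rename \<sigma>) (snd s)"
      using image by auto
    then show ?thesis
      unfolding is_axiom_def fst_conv snd_conv by blast
  qed
qed

(* In the eigenvariable cases the constant is renamed to one that is fresh for the
   renamed conclusion, so \<sigma> need not be injective. *)
lemma C_proof_rename_weaken:
  assumes "C_proof_using R s"
  shows "C_proof_using R (image_mset (rename \<sigma>) (fst s) + \<Sigma>, image_mset (rename \<sigma>) (snd s))"
  using assms
proof (induction arbitrary: \<sigma> rule: deriv.induct)
  case (ExL B \<Gamma> \<Delta> c)
  let ?concl = "(add_mset (Ex (rename \<sigma> B)) (image_mset (rename \<sigma>) \<Gamma> + \<Sigma>), image_mset (rename \<sigma>) \<Delta>)"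
  obtain d where d: "d \<notin> consts_seq ?concl"
    using ex_new_if_finite[OF infinite_UNIV_nat, of "consts_seq ?concl"] by auto
  from ExL.hyps(3) have unchanged: "rename (\<sigma>(c := d)) B = rename \<sigma> B"
    "image_mset (rename (\<sigma>(c := d))) \<Gamma> = image_mset (rename \<sigma>) \<Gamma>"
    "image_mset (rename (\<sigma>(c := d))) \<Delta> = image_mset (rename \<sigma>) \<Delta>"
    by (auto simp: consts_seq_def intro!: rename_fun_upd_fresh image_mset_rename_fun_upd_fresh)
  from ExL.IH[of "\<sigma>(c := d)"]
  have "C_proof_using R (add_mset (inst (rename \<sigma> B) (Fun d [])) (image_mset (rename \<sigma>) \<Gamma> + \<Sigma>),
      image_mset (rename \<sigma>) \<Delta>)"
    by (simp add: unchanged fun_upd_same del: fun_upd_apply)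
  with ExL.hyps(1) d show ?case
    by (simp add: deriv.ExL)
next
  case (AllR \<Gamma> B \<Delta> c)
  let ?concl = "(image_mset (rename \<sigma>) \<Gamma> + \<Sigma>, add_mset (All (rename \<sigma> B)) (image_mset (rename \<sigma>) \<Delta>))"
  obtain d where d: "d \<notin> consts_seq ?concl"
    using ex_new_if_finite[OF infinite_UNIV_nat, of "consts_seq ?concl"] by auto
  from AllR.hyps(3) have unchanged: "rename (\<sigma>(c := d)) B = rename \<sigma> B"
    "image_mset (rename (\<sigma>(c := d))) \<Gamma> = image_mset (rename \<sigma>) \<Gamma>"
    "image_mset (rename (\<sigma>(c := d))) \<Delta> = image_mset (rename \<sigma>) \<Delta>"
    by (auto simp: consts_seq_def intro!: rename_fun_upd_fresh image_mset_rename_fun_upd_fresh)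
  from AllR.IH[of "\<sigma>(c := d)"]
  have "C_proof_using R (image_mset (rename \<sigma>) \<Gamma> + \<Sigma>,
      add_mset (inst (rename \<sigma> B) (Fun d [])) (image_mset (rename \<sigma>) \<Delta>))"
    by (simp add: unchanged fun_upd_same del: fun_upd_apply)
  with AllR.hyps(1) d show ?case
    by (simp add: deriv.AllR)
qed (auto intro: deriv.intros is_axiom_rename_weaken)

lemma C_proof_weaken: "C_proof_using R (\<Gamma>, \<Delta>) \<Longrightarrow> C_proof_using R (\<Gamma> + \<Sigma>, \<Delta>)"
  using C_proof_rename_weaken[of R "(\<Gamma>, \<Delta>)" "\<lambda>c. c" \<Sigma>] by simp

lemma C_proof_rename_fresh_const:
  assumes "C_proof_using R (\<Gamma>, \<Delta> + replicate_mset n (inst B (Fun e [])))"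
    and "e \<notin> consts_seq (\<Gamma>, add_mset (All B) \<Delta>)"
  shows "C_proof_using R (\<Gamma>, \<Delta> + replicate_mset n (inst B (Fun c [])))"
proof -
  let ?\<sigma> = "(\<lambda>c. c)(e := c)"
  from assms(2) have "rename ?\<sigma> B = B" "image_mset (rename ?\<sigma>) \<Gamma> = \<Gamma>" "image_mset (rename ?\<sigma>) \<Delta> = \<Delta>"
    by (auto simp: consts_seq_def rename_fun_upd_fresh image_mset_rename_fun_upd_fresh)
  with C_proof_rename_weaken[OF assms(1), of ?\<sigma> "{#}"] show ?thesis
    by (simp add: fun_upd_same del: fun_upd_apply)
qed

section \<open>Inversion of the right rules\<close>

abbreviation restricted_provable :: "sequent \<Rightarrow> bool" where
  "restricted_provable \<equiv> C_proof_using (UNIV - {ImpL, OrR, ExR})"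

lemma add_mset_eq_plus_replicate_mset:
  assumes "add_mset A M = N + replicate_mset n G"
  obtains N' where "N = add_mset A N'" "M = N' + replicate_mset n G"
    | m where "A = G" "n = Suc m" "M = N + replicate_mset m G"
proof (cases "A \<in># N")
  case True
  then obtain N' where "N = add_mset A N'"
    by (meson multi_member_split)
  with assms that(1) show ?thesis
    by simp
next
  case False
  with assms have "A \<in># replicate_mset n G"
    by (metis union_iff union_single_eq_member)
  then obtain m where "A = G" "n = Suc m"
    by (cases n) (auto split: if_splits)
  with assms that(2) show ?thesis
    by simp
qed

lemma is_axiom_replace_compound:
  assumes "is_axiom s" "snd s = \<Delta> + replicate_mset n G" and "G \<noteq> Top" "G \<noteq> Bot" "\<not> is_atom G"
  shows "is_axiom (fst s + \<Sigma>, \<Delta> + replicate_mset n H)"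
  using assms unfolding is_axiom_def by (auto split: if_splits)

lemma restricted_provable_And_inversion:
  assumes "restricted_provable s" "snd s = \<Delta> + replicate_mset n (And X Y)" "Z = X \<or> Z = Y"
  shows "restricted_provable (fst s, \<Delta> + replicate_mset n Z)"
  using assms(1,2)
proof (induction arbitrary: \<Delta> n rule: deriv.induct)
  case (Axiom s)
  then show ?case
    using is_axiom_replace_compound[of s \<Delta> n "And X Y" "{#}"]
    by (auto simp: is_atom_def intro: deriv.Axiom)
next
  case (ContrR \<Gamma> B \<Delta>')
  from ContrR.prems have "add_mset B \<Delta>' = \<Delta> + replicate_mset n (And X Y)"
    by simp
  then show ?case
  proof (cases rule: add_mset_eq_plus_replicate_mset)
    case (1 N)
    then show ?thesis
      using ContrR.IH[of "add_mset B (add_mset B N)" n] by (auto intro: deriv.ContrR)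
  next
    case (2 m)
    then show ?thesis
      using ContrR.IH[of \<Delta> "Suc (Suc m)"] by (auto intro: deriv.ContrR)
  qed
next
  case (BotR \<Gamma> D \<Delta>')
  from BotR.prems have "add_mset D \<Delta>' = \<Delta> + replicate_mset n (And X Y)"
    by simp
  then show ?case
  proof (cases rule: add_mset_eq_plus_replicate_mset)
    case (1 N)
    then show ?thesis
      using BotR.IH[of "add_mset Bot N" n] by (auto intro: deriv.BotR)
  next
    case (2 m)
    then show ?thesis
      using BotR.IH[of "add_mset Bot \<Delta>" m] by (auto intro: deriv.BotR)
  qed
next
  case (AndR \<Gamma> B D \<Delta>')
  from AndR.prems have "add_mset (And B D) \<Delta>' = \<Delta> + replicate_mset n (And X Y)"
    by simp
  then show ?case
  proof (cases rule: add_mset_eq_plus_replicate_mset)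
    case (1 N)
    then show ?thesis
      using AndR.IH(1)[of "add_mset B N" n] AndR.IH(2)[of "add_mset D N" n]
      by (auto intro: deriv.AndR)
  next
    case (2 m)
    then show ?thesis
      using AndR.IH(1)[of "add_mset B \<Delta>" m] AndR.IH(2)[of "add_mset D \<Delta>" m] assms(3) by auto
  qed
next
  case (ImpR \<Gamma> B D \<Delta>')
  from ImpR.prems have "add_mset (Imp B D) \<Delta>' = \<Delta> + replicate_mset n (And X Y)"
    by simp
  then show ?case
  proof (cases rule: add_mset_eq_plus_replicate_mset)
    case (1 N)
    then show ?thesis
      using ImpR.IH[of "add_mset D N" n] by (auto intro: deriv.ImpR)
  qed simp
next
  case (AllR \<Gamma> B \<Delta>' c)
  from AllR.prems have "add_mset (All B) \<Delta>' = \<Delta> + replicate_mset n (And X Y)"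
    by simp
  then show ?case
  proof (cases rule: add_mset_eq_plus_replicate_mset)
    case (1 N)
    moreover have "c \<notin> consts_seq (\<Gamma>, add_mset (All B) N + replicate_mset n Z)"
      using AllR.hyps(3) 1 assms(3) by (auto simp: consts_seq_def)
    ultimately show ?thesis
      using AllR.IH[of "add_mset (inst B (Fun c [])) N" n] by (auto intro: deriv.AllR)
  qed simp
next
  case (ExL B \<Gamma> \<Delta>' c)
  moreover have "c \<notin> consts_seq (add_mset (Ex B) \<Gamma>, \<Delta> + replicate_mset n Z)"
    using ExL.hyps(3) ExL.prems assms(3) by (auto simp: consts_seq_def)
  ultimately show ?case
    by (auto intro: deriv.ExL)
qed (auto intro: deriv.intros)

lemma restricted_provable_Imp_inversion:
  assumes "restricted_provable s" "snd s = \<Delta> + replicate_mset n (Imp X Y)"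
  shows "restricted_provable (add_mset X (fst s), \<Delta> + replicate_mset n Y)"
  using assms
proof (induction arbitrary: \<Delta> n rule: deriv.induct)
  case (Axiom s)
  then show ?case
    using is_axiom_replace_compound[of s \<Delta> n "Imp X Y" "{#X#}"]
    by (auto simp: is_atom_def intro: deriv.Axiom)
next
  case (ContrR \<Gamma> B \<Delta>')
  from ContrR.prems have "add_mset B \<Delta>' = \<Delta> + replicate_mset n (Imp X Y)"
    by simp
  then show ?case
  proof (cases rule: add_mset_eq_plus_replicate_mset)
    case (1 N)
    then show ?thesis
      using ContrR.IH[of "add_mset B (add_mset B N)" n] by (auto intro: deriv.ContrR)
  next
    case (2 m)
    then show ?thesis
      using ContrR.IH[of \<Delta> "Suc (Suc m)"] by (auto intro: deriv.ContrR)
  qed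
next
  case (BotR \<Gamma> D \<Delta>')
  from BotR.prems have "add_mset D \<Delta>' = \<Delta> + replicate_mset n (Imp X Y)"
    by simp
  then show ?case
  proof (cases rule: add_mset_eq_plus_replicate_mset)
    case (1 N)
    then show ?thesis
      using BotR.IH[of "add_mset Bot N" n] by (auto intro: deriv.BotR)
  next
    case (2 m)
    then show ?thesis
      using BotR.IH[of "add_mset Bot \<Delta>" m] by (auto intro: deriv.BotR)
  qed
next
  case (AndR \<Gamma> B D \<Delta>')
  from AndR.prems have "add_mset (And B D) \<Delta>' = \<Delta> + replicate_mset n (Imp X Y)"
    by simp
  then show ?case
  proof (cases rule: add_mset_eq_plus_replicate_mset)
    case (1 N)
    then show ?thesis
      using AndR.IH(1)[of "add_mset B N" n] AndR.IH(2)[of "add_mset D N" n]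
      by (auto intro: deriv.AndR)
  qed simp
next
  case (ImpR \<Gamma> B D \<Delta>')
  from ImpR.prems have "add_mset (Imp B D) \<Delta>' = \<Delta> + replicate_mset n (Imp X Y)"
    by simp
  then show ?case
  proof (cases rule: add_mset_eq_plus_replicate_mset)
    case (1 N)
    then show ?thesis
      using ImpR.IH[of "add_mset D N" n] by (auto simp: add_mset_commute[of X] intro: deriv.ImpR)
  next
    case (2 m)
    then have "restricted_provable (add_mset X (add_mset X \<Gamma>), \<Delta> + replicate_mset n Y)"
      using ImpR.IH[of "add_mset Y \<Delta>" m] by simp
    then show ?thesis
      by (auto intro: deriv.ContrL)
  qed
next
  case (AllR \<Gamma> B \<Delta>' c)
  from AllR.prems have "add_mset (All B) \<Delta>' = \<Delta> + replicate_mset n (Imp X Y)"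
    by simp
  then show ?case
  proof (cases rule: add_mset_eq_plus_replicate_mset)
    case (1 N)
    show ?thesis
    proof (cases n)
      case 0 \<comment> \<open>then the eigenvariable may occur in X, but the claim is a mere weakening\<close>
      from AllR.hyps have "restricted_provable (\<Gamma>, add_mset (All B) \<Delta>')"
        by (auto intro: deriv.AllR)
      with 0 1 show ?thesis
        using C_proof_weaken[of _ \<Gamma> _ "{#X#}"] by simp
    next
      case (Suc m)
      with AllR.hyps(3) 1
      have "c \<notin> consts_seq (add_mset X \<Gamma>, add_mset (All B) N + replicate_mset n Y)"
        by (auto simp: consts_seq_def)
      with 1 show ?thesis
        using AllR.IH[of "add_mset (inst B (Fun c [])) N" n] by (auto intro: deriv.AllR)
    qed
  qed simp
next
  case (ExL B \<Gamma> \<Delta>' c)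
  show ?case
  proof (cases n)
    case 0
    from ExL.hyps have "restricted_provable (add_mset (Ex B) \<Gamma>, \<Delta>')"
      by (auto intro: deriv.ExL)
    with 0 ExL.prems show ?thesis
      using C_proof_weaken[of _ "add_mset (Ex B) \<Gamma>" _ "{#X#}"] by simp
  next
    case (Suc m)
    with ExL.hyps(3) ExL.prems
    have "c \<notin> consts_seq (add_mset (Ex B) (add_mset X \<Gamma>), \<Delta> + replicate_mset n Y)"
      by (auto simp: consts_seq_def)
    with ExL.IH[of \<Delta> n] ExL.prems show ?thesis
      by (auto simp: add_mset_commute[of X] intro: deriv.ExL)
  qed
qed (auto simp: add_mset_commute[of X] intro: deriv.intros)

lemma consts_seq_replicate_inst:
  "consts_seq (\<Gamma>, \<Delta> + replicate_mset n (inst B (Fun e []))) \<subseteq>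
    consts_seq (\<Gamma>, \<Delta> + replicate_mset n (All B)) \<union> {e}"
  using consts_subst[of B "Fun e []" 0] by (auto simp: consts_seq_def)

(* The eigenvariable d of a side rule may coincide with c, so the induction goes through
   a constant e fresh for everything in sight, renamed to c afterwards. *)
lemma restricted_provable_All_inversion:
  assumes "restricted_provable s" "snd s = \<Delta> + replicate_mset n (All B)"
  shows "restricted_provable (fst s, \<Delta> + replicate_mset n (inst B (Fun c [])))"
  using assms
proof (induction arbitrary: \<Delta> n c rule: deriv.induct)
  case (Axiom s)
  then show ?case
    using is_axiom_replace_compound[of s \<Delta> n "All B" "{#}"]
    by (auto simp: is_atom_def intro: deriv.Axiom)
next
  case (ContrR \<Gamma> A \<Delta>')
  from ContrR.prems have "add_mset A \<Delta>' = \<Delta> + replicate_mset n (All B)"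
    by simp
  then show ?case
  proof (cases rule: add_mset_eq_plus_replicate_mset)
    case (1 N)
    then show ?thesis
      using ContrR.IH[of "add_mset A (add_mset A N)" n c] by (auto intro: deriv.ContrR)
  next
    case (2 m)
    then show ?thesis
      using ContrR.IH[of \<Delta> "Suc (Suc m)" c] by (auto intro: deriv.ContrR)
  qed
next
  case (BotR \<Gamma> D \<Delta>')
  from BotR.prems have "add_mset D \<Delta>' = \<Delta> + replicate_mset n (All B)"
    by simp
  then show ?case
  proof (cases rule: add_mset_eq_plus_replicate_mset)
    case (1 N)
    then show ?thesis
      using BotR.IH[of "add_mset Bot N" n c] by (auto intro: deriv.BotR)
  next
    case (2 m)
    then show ?thesis
      using BotR.IH[of "add_mset Bot \<Delta>" m c] by (auto intro: deriv.BotR)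
  qed
next
  case (AndR \<Gamma> A D \<Delta>')
  from AndR.prems have "add_mset (And A D) \<Delta>' = \<Delta> + replicate_mset n (All B)"
    by simp
  then show ?case
  proof (cases rule: add_mset_eq_plus_replicate_mset)
    case (1 N)
    then show ?thesis
      using AndR.IH(1)[of "add_mset A N" n c] AndR.IH(2)[of "add_mset D N" n c]
      by (auto intro: deriv.AndR)
  qed simp
next
  case (ImpR \<Gamma> A D \<Delta>')
  from ImpR.prems have "add_mset (Imp A D) \<Delta>' = \<Delta> + replicate_mset n (All B)"
    by simp
  then show ?case
  proof (cases rule: add_mset_eq_plus_replicate_mset)
    case (1 N)
    then show ?thesis
      using ImpR.IH[of "add_mset D N" n c] by (auto intro: deriv.ImpR)
  qed simp
next
  case (AllR \<Gamma> A \<Delta>' d)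
  from AllR.prems have "add_mset (All A) \<Delta>' = \<Delta> + replicate_mset n (All B)"
    by simp
  then show ?case
  proof (cases rule: add_mset_eq_plus_replicate_mset)
    case (1 N)
    obtain e where e: "e \<notin> consts_seq (\<Gamma>, add_mset (All B) \<Delta>) \<union> {d}"
      using ex_new_if_finite[OF infinite_UNIV_nat, of "consts_seq (\<Gamma>, add_mset (All B) \<Delta>) \<union> {d}"]
      by auto
    have "restricted_provable (\<Gamma>, add_mset (inst A (Fun d [])) N + replicate_mset n (inst B (Fun e [])))"
      using AllR.IH[of "add_mset (inst A (Fun d [])) N" n e] 1 by simp
    moreover have "d \<notin> consts_seq (\<Gamma>, add_mset (All A) N + replicate_mset n (inst B (Fun e [])))"
      using AllR.hyps(3) 1 e consts_seq_replicate_inst[of \<Gamma> "add_mset (All A) N" n B e] by auto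
    ultimately have "restricted_provable (\<Gamma>, add_mset (All A) N + replicate_mset n (inst B (Fun e [])))"
      by (auto intro: deriv.AllR)
    with 1 e show ?thesis
      using C_proof_rename_fresh_const[of _ \<Gamma> "add_mset (All A) N" n B e c] by simp
  next
    case (2 m)
    then have "restricted_provable (\<Gamma>, \<Delta> + replicate_mset n (inst B (Fun d [])))"
      using AllR.IH[of "add_mset (inst B (Fun d [])) \<Delta>" m d] by simp
    moreover have "d \<notin> consts_seq (\<Gamma>, add_mset (All B) \<Delta>)"
      using AllR.hyps(3) 2 by (auto simp: consts_seq_def)
    ultimately show ?thesis
      by (auto intro: C_proof_rename_fresh_const)
  qed
next
  case (ExL A \<Gamma> \<Delta>' d)
  obtain e where e: "e \<notin> consts_seq (add_mset (Ex A) \<Gamma>, add_mset (All B) \<Delta>) \<union> {d}"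
    using ex_new_if_finite[OF infinite_UNIV_nat,
        of "consts_seq (add_mset (Ex A) \<Gamma>, add_mset (All B) \<Delta>) \<union> {d}"]
    by auto
  have "restricted_provable (add_mset (inst A (Fun d [])) \<Gamma>, \<Delta> + replicate_mset n (inst B (Fun e [])))"
    using ExL.IH[of \<Delta> n e] ExL.prems by simp
  moreover have "d \<notin> consts_seq (add_mset (Ex A) \<Gamma>, \<Delta> + replicate_mset n (inst B (Fun e [])))"
    using ExL.hyps(3) ExL.prems e consts_seq_replicate_inst[of "add_mset (Ex A) \<Gamma>" \<Delta> n B e]
    by auto
  ultimately have "restricted_provable (add_mset (Ex A) \<Gamma>, \<Delta> + replicate_mset n (inst B (Fun e [])))"
    by (auto intro: deriv.ExL)
  with e show ?case
    by (auto intro: C_proof_rename_fresh_const)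
qed (auto intro: deriv.intros)

section \<open>Replaying a restricted proof intuitionistically\<close>

fun right_invertible :: "fm \<Rightarrow> bool" where
  "right_invertible (And _ _) = True"
| "right_invertible (Imp _ _) = True"
| "right_invertible (All _) = True"
| "right_invertible _ = False"

lemma I_provable_BotR: "I_provable (\<Gamma>, {#Bot#}) \<Longrightarrow> I_provable (\<Gamma>, {#D#})"
  using deriv.BotR[of UNIV _ \<Gamma> D "{#}"] by simp

lemma I_provable_axiom:
  assumes "is_axiom (\<Gamma>, \<Delta>)" "set_mset \<Delta> \<subseteq> {G, Bot}"
  shows "I_provable (\<Gamma>, {#if G \<in># \<Delta> then G else Bot#})"
proof -
  from assms(1) consider "Top \<in># \<Delta>" | A where "A = Bot \<or> is_atom A" "A \<in># \<Gamma>" "A \<in># \<Delta>"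
    unfolding is_axiom_def by auto
  then show ?thesis
  proof cases
    case 1
    with assms(2) have "G = Top" "G \<in># \<Delta>"
      by auto
    then show ?thesis
      by (simp add: deriv.Axiom is_axiom_def)
  next
    case (2 A)
    with assms(2) have "A = G \<or> A = Bot"
      by auto
    then show ?thesis
    proof
      assume "A = G"
      with 2 show ?thesis
        by (auto simp: is_axiom_def intro: deriv.Axiom)
    next
      assume "A = Bot"
      with 2 have "I_provable (\<Gamma>, {#Bot#})"
        by (auto simp: is_axiom_def intro: deriv.Axiom)
      then show ?thesis
        by (rule I_provable_BotR)
    qed
  qed
qed

(* The succedent is replaced by G if it contains G and by \<bottom> otherwise; fixing one formula
   is what lets \<or>-L and the eigenvariable conditions be replayed. *)
lemma restricted_provable_non_invertible:
  assumes "restricted_provable s" "set_mset (snd s) \<subseteq> {G, Bot}" "\<not> right_invertible G"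
  shows "I_provable (fst s, {#if G \<in># snd s then G else Bot#})"
  using assms(1,2)
proof (induction rule: deriv.induct)
  case (Axiom s)
  then show ?case
    using I_provable_axiom[of "fst s" "snd s" G] by simp
next
  case (BotR \<Gamma> D \<Delta>)
  then show ?case
    using I_provable_BotR[of \<Gamma> G] by (auto split: if_splits)
next
  case (ExL B \<Gamma> \<Delta> c)
  moreover have "c \<notin> consts_seq (add_mset (Ex B) \<Gamma>, {#if G \<in># \<Delta> then G else Bot#})"
    using ExL.hyps(3) by (auto simp: consts_seq_def)
  ultimately show ?case
    by (auto intro: deriv.ExL)
qed (use assms(3) in \<open>auto intro: deriv.intros\<close>)

primrec connectives :: "fm \<Rightarrow> nat" where
  "connectives (Atom p ts) = 0"
| "connectives Top = 0"
| "connectives Bot = 0"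
| "connectives (And A B) = Suc (connectives A + connectives B)"
| "connectives (Or A B) = Suc (connectives A + connectives B)"
| "connectives (Imp A B) = Suc (connectives A + connectives B)"
| "connectives (All A) = Suc (connectives A)"
| "connectives (Ex A) = Suc (connectives A)"

lemma connectives_subst [simp]: "connectives (subst A s k) = connectives A"
  by (induct A arbitrary: s k) auto

lemma restricted_provable_imp_I_provable:
  assumes "restricted_provable (\<Gamma>, \<Delta>)" "set_mset \<Delta> \<subseteq> {G, Bot}"
  shows "I_provable (\<Gamma>, {#G#})"
  using assms
proof (induction G arbitrary: \<Gamma> \<Delta> rule: measure_induct_rule[of connectives])
  case (less G)
  define n where "n = count \<Delta> G"
  define \<Delta>\<^sub>0 where "\<Delta>\<^sub>0 = filter_mset (\<lambda>F. F \<noteq> G) \<Delta>"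
  have \<Delta>: "\<Delta> = \<Delta>\<^sub>0 + replicate_mset n G"
    unfolding \<Delta>\<^sub>0_def n_def by (metis filter_eq_replicate_mset multiset_partition union_commute)
  have \<Delta>\<^sub>0: "set_mset (\<Delta>\<^sub>0 + replicate_mset n H) \<subseteq> {H, Bot}" for H
    using less.prems(2) unfolding \<Delta>\<^sub>0_def by auto
  show ?case
  proof (cases G)
    case (And X Y)
    with restricted_provable_And_inversion[OF less.prems(1)] \<Delta>
    have "restricted_provable (\<Gamma>, \<Delta>\<^sub>0 + replicate_mset n X)"
      "restricted_provable (\<Gamma>, \<Delta>\<^sub>0 + replicate_mset n Y)"
      by auto
    with less.IH[of X] less.IH[of Y] \<Delta>\<^sub>0 And have "I_provable (\<Gamma>, {#X#})" "I_provable (\<Gamma>, {#Y#})"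
      by auto
    with And show ?thesis
      using deriv.AndR[of UNIV _ \<Gamma> X Y "{#}"] by simp
  next
    case (Imp X Y)
    then have "restricted_provable (add_mset X \<Gamma>, \<Delta>\<^sub>0 + replicate_mset n Y)"
      using restricted_provable_Imp_inversion[OF less.prems(1)] \<Delta> by auto
    with less.IH \<Delta>\<^sub>0 Imp have "I_provable (add_mset X \<Gamma>, {#Y#})"
      by auto
    with Imp show ?thesis
      using deriv.ImpR[of UNIV _ \<Gamma> X Y "{#}"] by simp
  next
    case (All B)
    obtain c where c: "c \<notin> consts_seq (\<Gamma>, {#All B#})"
      using ex_new_if_finite[OF infinite_UNIV_nat, of "consts_seq (\<Gamma>, {#All B#})"] by auto
    from All have "restricted_provable (\<Gamma>, \<Delta>\<^sub>0 + replicate_mset n (inst B (Fun c [])))"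
      using restricted_provable_All_inversion[OF less.prems(1)] \<Delta> by auto
    with less.IH \<Delta>\<^sub>0 All have "I_provable (\<Gamma>, {#inst B (Fun c [])#})"
      by auto
    with All c show ?thesis
      using deriv.AllR[of UNIV _ \<Gamma> B "{#}" c] by simp
  qed (use restricted_provable_non_invertible[of "(\<Gamma>, \<Delta>)" G] less.prems I_provable_BotR
       in \<open>auto split: if_splits\<close>)
qed

theorem theorem6:
  fixes \<Gamma> :: "fm multiset" and B :: fm
  assumes "C_proof_using (UNIV - {ImpL, OrR, ExR}) (\<Gamma>, {#B#})"
  shows "I_provable (\<Gamma>, {#B#})"
  using restricted_provable_imp_I_provable[OF assms] by simp

end
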